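(* For every $n\ge 1$, $$\sum_{F\in F_n}q^{\operatorname{inv}(F)}u^{\operatorname{lead}(F)}c^{\operatorname{tree}(F)}=\sum_{P\in PF_n}q^{\operatorname{jump}(P)}u^{\operatorname{lucky}(P)}c^{\operatorname{critic}(P)}.$$
   Context: $F_n$ is the set of rooted forests on the vertex set $\{1,\dots,n\}$ (graphs whose components are trees, each with a distinguished root). A vertex $j$ is a descendant of $i$ if $j\ne i$ and $i$ lies on the path from the root of its component to $j$. An inversion of $F$ is a pair $(i,j)$ with $i>j$ and $j$ a descendant of $i$; $\operatorname{inv}(F)$ is the number of inversions. A vertex $v$ is a leader if it is smaller than all its descendants; $\operatorname{lead}(F)$ is the number of leaders; $\operatorname{tree}(F)$ is the number of trees of $F$. Parking algorithm: for a sequence $P=(p_1,\dots,p_n)$ of positive integers, cars $1,\dots,n$ park in turn, car $c$ taking the first empty space among $p_c,p_c+1,\dots$; let $q_c$ be its space. $PF_n$ is the set of such sequences with all $q_c\le n$. $\operatorname{jump}(P)=\sum_c(q_c-p_c)=\binom{n+1}{2}-\sum_c p_c$; a car is lucky if $q_c=p_c$, and $\operatorname{lucky}(P)$ is the number of lucky cars. A car $c$ is critical if at the moment it parks all spaces $q_c+1,\dots,n$ are occupied; $\operatorname{critic}(P)$ is the number of critical cars. *)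

theory Defs
  imports Main
begin

text \<open>A rooted forest on the vertex set {1..n} is encoded by its parent map:
  par v = None if v is a root, par v = Some w if w is the parent of v
  (the neighbour of v on the path from the root of its component to v).\<close>

definition parent_rel :: "(nat \<Rightarrow> nat option) \<Rightarrow> (nat \<times> nat) set" where
  "parent_rel par = {(v, w). par v = Some w}"

definition descendant :: "(nat \<Rightarrow> nat option) \<Rightarrow> nat \<Rightarrow> nat \<Rightarrow> bool" where
  "descendant par i j \<longleftrightarrow> j \<noteq> i \<and> (j, i) \<in> (parent_rel par)\<^sup>+"

definition rooted_forests :: "nat \<Rightarrow> (nat \<Rightarrow> nat option) set" where
  "rooted_forests n = {par.
      (\<forall>v. v \<notin> {1..n} \<longrightarrow> par v = None)
    \<and> (\<forall>v w. par v = Some w \<longrightarrow> w \<in> {1..n})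
    \<and> (\<forall>v. (v, v) \<notin> (parent_rel par)\<^sup>+)}"

definition inv_forest :: "nat \<Rightarrow> (nat \<Rightarrow> nat option) \<Rightarrow> nat" where
  "inv_forest n par = card {(i, j). i \<in> {1..n} \<and> j \<in> {1..n} \<and> j < i \<and> descendant par i j}"

definition lead_forest :: "nat \<Rightarrow> (nat \<Rightarrow> nat option) \<Rightarrow> nat" where
  "lead_forest n par = card {v \<in> {1..n}. \<forall>j. descendant par v j \<longrightarrow> v < j}"

definition tree_forest :: "nat \<Rightarrow> (nat \<Rightarrow> nat option) \<Rightarrow> nat" where
  "tree_forest n par = card {v \<in> {1..n}. par v = None}"

fun park_spaces :: "nat set \<Rightarrow> nat list \<Rightarrow> nat list" where
  "park_spaces occ [] = []"
| "park_spaces occ (p # ps) =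
     (let s = (LEAST s. p \<le> s \<and> s \<notin> occ) in s # park_spaces (insert s occ) ps)"

definition spaces :: "nat list \<Rightarrow> nat list" where
  "spaces P = park_spaces {} P"

text \<open>Cars are indexed 0..n-1 here (car c+1 of the paper is index c).\<close>
definition parking_functions :: "nat \<Rightarrow> nat list set" where
  "parking_functions n = {P. length P = n \<and> (\<forall>x \<in> set P. 0 < x)
                            \<and> (\<forall>c < n. spaces P ! c \<le> n)}"

definition jump :: "nat list \<Rightarrow> nat" where
  "jump P = (\<Sum>c < length P. spaces P ! c - P ! c)"

definition lucky :: "nat list \<Rightarrow> nat" where
  "lucky P = card {c. c < length P \<and> spaces P ! c = P ! c}"

definition critic :: "nat \<Rightarrow> nat list \<Rightarrow> nat" where
  "critic n P = card {c. c < length P \<and>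
       {spaces P ! c + 1 .. n} \<subseteq> set (take c (spaces P))}"

end

theory Submission
  imports Defs
begin

text \<open>Both generating functions satisfy R 0 = 1 and
  R (n + 1) c = c * (\<Sum>k\<le>n. (n choose k) * (u + q + ... + q^k) * R k 1 * R (n - k) c).

  For forests, split off the tree T containing the smallest vertex m. If j vertices of T are
  smaller than its root r, then r contributes j inversions, is a leader iff r = m, i.e. j = 0,
  and adds one tree; deleting r leaves a forest on the other k vertices of T whose trees hang
  from r, so it is counted with c = 1.

  For parking functions, condition on the space s of the last car. The earlier cars preferring
  a space below s fill the spaces below s, the others prefer and fill spaces above s, and the
  two groups never compete. The last car, with preference x \<le> s, jumps s - x, is lucky iff
  x = s and is always critical, while no car parking below s is critical, because s is still
  free.\<close>

section \<open>The common recursion\<close>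

definition bracket :: "'a::comm_semiring_1 \<Rightarrow> 'a \<Rightarrow> nat \<Rightarrow> 'a" where
  "bracket q u k = (\<Sum>j\<le>k. q ^ j * u ^ (if j = 0 then 1 else 0))"

fun recursive_gf :: "'a::comm_semiring_1 \<Rightarrow> 'a \<Rightarrow> 'a \<Rightarrow> nat \<Rightarrow> 'a" where
  "recursive_gf q u c 0 = 1"
| "recursive_gf q u c (Suc n) = c * (\<Sum>k\<le>n. of_nat (n choose k) * bracket q u k
     * recursive_gf q u 1 k * recursive_gf q u c (n - k))"

lemma sum_greaterThanAtMost_reindex:
  "(\<Sum>s\<in>{a<..a + Suc n}. F (s - Suc a)) = (\<Sum>k\<le>n. F k)"
  by (rule sum.reindex_bij_witness[of _ "\<lambda>k. k + Suc a" "\<lambda>s. s - Suc a"]) auto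

lemma card_filter_eq_sum: "finite A \<Longrightarrow> card {x \<in> A. P x} = (\<Sum>x\<in>A. if P x then 1 else 0)"
  by (simp add: sum.If_cases Int_def conj_commute)

lemma sum_insert_Un_disjoint:
  assumes "finite A" "finite B" "A \<inter> B = {}" "r \<notin> A \<union> B"
  shows "sum f (insert r (A \<union> B)) = sum f A + sum f B + f r"
  using assms by (simp add: sum.union_disjoint add_ac)

lemma sum_rank:
  assumes "finite (S :: nat set)"
  shows "(\<Sum>r\<in>S. g (card {j \<in> S. j < r})) = (\<Sum>k<card S. g k)"
proof -
  define rank where "rank r = card {j \<in> S. j < r}" for r
  have less: "rank x < rank y" if "x \<in> S" "y \<in> S" "x < y" for x y
    unfolding rank_def using that assms by (intro psubset_card_mono) auto
  have "inj_on rank S"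
    by (rule inj_onI) (metis less less_irrefl linorder_neqE_nat)
  moreover have "rank ` S = {..<card S}"
  proof (rule card_subset_eq)
    show "rank ` S \<subseteq> {..<card S}"
      unfolding rank_def using assms by (auto intro!: psubset_card_mono)
    show "card (rank ` S) = card {..<card S}" using card_image[OF \<open>inj_on rank S\<close>] by simp
  qed simp
  ultimately show ?thesis unfolding rank_def[symmetric] using sum.reindex[of rank S g] by simp
qed

lemma sum_Pow_card:
  assumes "finite W"
  shows "(\<Sum>T\<in>Pow W. h (card T)) = (\<Sum>k\<le>card W. of_nat (card W choose k) * (h k :: 'a::comm_semiring_1))"
proof -
  have "(\<Sum>T\<in>Pow W. h (card T)) = (\<Sum>k\<le>card W. \<Sum>T\<in>{T \<in> Pow W. card T = k}. h (card T))"
    by (rule sum.group[symmetric]) (use assms card_mono in auto)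
  also have "\<dots> = (\<Sum>k\<le>card W. of_nat (card W choose k) * h k)"
  proof (rule sum.cong[OF refl])
    fix k
    have "(\<Sum>T\<in>{T \<in> Pow W. card T = k}. h (card T)) = (\<Sum>T\<in>{T. T \<subseteq> W \<and> card T = k}. h k)"
      by (rule sum.cong) auto
    then show "(\<Sum>T\<in>{T \<in> Pow W. card T = k}. h (card T)) = of_nat (card W choose k) * h k"
      using n_subsets[OF assms, of k] by simp
  qed
  finally show ?thesis .
qed

section \<open>Parking functions\<close>

definition first_free :: "nat \<Rightarrow> nat set \<Rightarrow> nat" where
  "first_free p A = (LEAST t. p \<le> t \<and> t \<notin> A)"

lemma first_free_exists:
  assumes "finite (A :: nat set)"
  shows "\<exists>t. p \<le> t \<and> t \<notin> A"
proof -
  have "Max (insert p A) + 1 \<notin> A"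
    using Max_ge[of "insert p A"] assms by fastforce
  moreover have "p \<le> Max (insert p A) + 1"
    using assms by (simp add: le_SucI)
  ultimately show ?thesis by blast
qed

lemma first_free_ge_notin:
  assumes "finite A"
  shows "p \<le> first_free p A" "first_free p A \<notin> A"
  using LeastI_ex[OF first_free_exists[OF assms, of p]] unfolding first_free_def by auto

lemma first_free_below_mem: "p \<le> t \<Longrightarrow> t < first_free p A \<Longrightarrow> t \<in> A"
  unfolding first_free_def using not_less_Least by blast

lemma first_free_le: "p \<le> t \<Longrightarrow> t \<notin> A \<Longrightarrow> first_free p A \<le> t"
  unfolding first_free_def by (simp add: Least_le)

lemma first_free_eqI:
  "p \<le> x \<Longrightarrow> x \<notin> A \<Longrightarrow> (\<And>t. p \<le> t \<Longrightarrow> t < x \<Longrightarrow> t \<in> A) \<Longrightarrow> first_free p A = x"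
  unfolding first_free_def by (rule Least_equality) (auto simp: not_less[symmetric])

lemma first_free_mono:
  assumes "A \<subseteq> B" "finite B"
  shows "first_free p A \<le> first_free p B"
  using first_free_ge_notin[OF assms(2)] assms(1) by (intro first_free_le) auto

lemma first_free_Un_greater:
  assumes "finite A" "\<forall>y\<in>B. first_free p A < y"
  shows "first_free p (A \<union> B) = first_free p A"
  using assms first_free_ge_notin[OF assms(1), of p] first_free_below_mem[of p _ A]
  by (intro first_free_eqI) auto

lemma first_free_Un_less:
  assumes "\<forall>y\<in>B. y < p"
  shows "first_free p (B \<union> A) = first_free p A"
proof -
  have "(p \<le> t \<and> t \<notin> B \<union> A) \<longleftrightarrow> (p \<le> t \<and> t \<notin> A)" for t
    using assms by force
  then show ?thesis unfolding first_free_def by simp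
qed

lemma first_free_separated:
  assumes "finite A" "finite B" "\<forall>y\<in>A. y < s" "\<forall>y\<in>B. s < y"
  shows "first_free p A < s \<or> first_free p (A \<union> B) < s \<Longrightarrow> first_free p (A \<union> B) = first_free p A"
    and "s < p \<Longrightarrow> first_free p (A \<union> B) = first_free p B"
proof -
  assume "first_free p A < s \<or> first_free p (A \<union> B) < s"
  then have "first_free p A < s"
    using first_free_mono[of A "A \<union> B" p] assms(1,2) by auto
  then show "first_free p (A \<union> B) = first_free p A"
    using first_free_Un_greater[OF assms(1)] assms(4) by force
next
  assume "s < p"
  then show "first_free p (A \<union> B) = first_free p B"
    using first_free_Un_less[of A p B] assms(3) by force
qed

text \<open>The parking process for an arbitrary finite set C of cars, which park in increasing
  order, car i preferring space f i.\<close>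

function park_space :: "(nat \<Rightarrow> nat) \<Rightarrow> nat set \<Rightarrow> nat \<Rightarrow> nat" where
  "park_space f C i = first_free (f i) (park_space f C ` {j \<in> C. j < i})"
  by auto
termination by (relation "measure (\<lambda>(f, C, i). i)") auto

declare park_space.simps [simp del]

lemma park_space_ge_notin:
  "f i \<le> park_space f C i" "park_space f C i \<notin> park_space f C ` {j \<in> C. j < i}"
proof -
  have "finite (park_space f C ` {j \<in> C. j < i})" by simp
  from first_free_ge_notin[OF this, of "f i", folded park_space.simps[of f C i]] show
    "f i \<le> park_space f C i" "park_space f C i \<notin> park_space f C ` {j \<in> C. j < i}" .
qed

lemma park_space_neq: "j \<in> C \<Longrightarrow> j < i \<Longrightarrow> park_space f C i \<noteq> park_space f C j"
  using park_space_ge_notin(2)[of f C i] by auto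

lemma inj_on_park_space: "inj_on (park_space f C) C"
  unfolding inj_on_def by (metis linorder_neqE_nat park_space_neq)

lemma park_space_cong:
  "(\<And>j. j \<in> C \<Longrightarrow> j \<le> i \<Longrightarrow> f j = g j) \<Longrightarrow> f i = g i \<Longrightarrow> park_space f C i = park_space g C i"
proof (induction i rule: less_induct)
  case (less i)
  have "park_space f C ` {j \<in> C. j < i} = park_space g C ` {j \<in> C. j < i}"
    using less by (intro image_cong) auto
  then show ?case
    by (simp only: park_space.simps[of f C i] park_space.simps[of g C i] less.prems(2))
qed

lemma earlier_Un:
  assumes "I \<union> J = C - {z}" "i \<le> (z :: nat)"
  shows "{j \<in> C. j < i} = {j \<in> I. j < i} \<union> {j \<in> J. j < i}"
proof -
  have "{j \<in> C. j < i} = {j \<in> C - {z}. j < i}" using assms(2) by auto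
  then show ?thesis unfolding assms(1)[symmetric] by auto
qed

text \<open>The disjunction in the hypothesis on I makes the lemma usable in both directions of the
  bijection below: when gluing we know where the cars of I park on their own, when
  decomposing where they park among all cars.\<close>

lemma park_space_separated:
  assumes z: "\<forall>i\<in>C. i \<le> z" and IJ: "I \<union> J = C - {z}" "I \<inter> J = {}"
    and below: "\<forall>i\<in>I. park_space f I i < s \<or> park_space f C i < s"
    and above: "\<forall>j\<in>J. s < f j"
  shows "(i \<in> I \<longrightarrow> park_space f C i = park_space f I i)
       \<and> (i \<in> J \<longrightarrow> park_space f C i = park_space f J i)"
proof (induction i rule: less_induct)
  case (less i)
  show ?case
  proof (cases "i \<in> I \<union> J")
    case True
    have "i \<le> z" using True IJ z by auto
    define AI where "AI = park_space f I ` {j \<in> I. j < i}"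
    define AJ where "AJ = park_space f J ` {j \<in> J. j < i}"
    have "park_space f C ` {j \<in> C. j < i}
        = park_space f C ` {j \<in> I. j < i} \<union> park_space f C ` {j \<in> J. j < i}"
      unfolding earlier_Un[OF IJ(1) \<open>i \<le> z\<close>] by (rule image_Un)
    also have "\<dots> = AI \<union> AJ"
      unfolding AI_def AJ_def using less by (intro arg_cong2[where f = "(\<union>)"] image_cong) auto
    finally have C_eq: "park_space f C i = first_free (f i) (AI \<union> AJ)"
      using park_space.simps[of f C i] by simp
    have I_eq: "park_space f I i = first_free (f i) AI"
      unfolding AI_def by (rule park_space.simps)
    have J_eq: "park_space f J i = first_free (f i) AJ"
      unfolding AJ_def by (rule park_space.simps)
    have AI_below: "\<forall>y\<in>AI. y < s"
    proof
      fix y assume "y \<in> AI"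
      then obtain j where "j \<in> I" "j < i" "y = park_space f I j" unfolding AI_def by auto
      with less.IH[of j] below show "y < s" by auto
    qed
    have AJ_above: "\<forall>y\<in>AJ. s < y"
    proof
      fix y assume "y \<in> AJ"
      then obtain j where "j \<in> J" "y = park_space f J j" unfolding AJ_def by auto
      with above park_space_ge_notin(1)[of f j J] show "s < y" by auto
    qed
    have "finite AI" "finite AJ" unfolding AI_def AJ_def by auto
    note separated = first_free_separated[OF this AI_below AJ_above]
    show ?thesis
    proof (intro conjI impI)
      assume "i \<in> I"
      with below have "park_space f I i < s \<or> park_space f C i < s" by blast
      then show "park_space f C i = park_space f I i"
        unfolding C_eq I_eq by (rule separated(1))
    next
      assume "i \<in> J"
      with above show "park_space f C i = park_space f J i"
        unfolding C_eq J_eq by (intro separated(2)) blast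
    qed
  qed auto
qed

text \<open>The interval (a, b] plays the role of the lot {1..n}. Preferences are fixed to 0 outside
  C so that the set is finite.\<close>

definition parking_funs :: "nat set \<Rightarrow> nat \<Rightarrow> nat \<Rightarrow> (nat \<Rightarrow> nat) set" where
  "parking_funs C a b = {f. (\<forall>i. i \<notin> C \<longrightarrow> f i = 0)
     \<and> (\<forall>i\<in>C. a < f i \<and> f i \<le> b \<and> park_space f C i \<le> b)}"

lemma finite_parking_funs:
  assumes "finite C"
  shows "finite (parking_funs C a b)"
proof (rule finite_subset)
  show "parking_funs C a b \<subseteq> {f. \<forall>x. (x \<in> C \<longrightarrow> f x \<in> {0..b}) \<and> (x \<notin> C \<longrightarrow> f x = 0)}"
    unfolding parking_funs_def by auto
  show "finite \<dots>" using finite_set_of_finite_funs[OF assms, of "{0..b}" 0] by simp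
qed

lemma park_space_image:
  assumes "finite C" "b = a + card C" "f \<in> parking_funs C a b"
  shows "park_space f C ` C = {a<..b}"
proof (rule card_subset_eq)
  show "park_space f C ` C \<subseteq> {a<..b}"
  proof (rule image_subsetI)
    fix i assume "i \<in> C"
    then have "a < f i" "park_space f C i \<le> b" using assms(3) unfolding parking_funs_def by auto
    with park_space_ge_notin(1)[of f i C] show "park_space f C i \<in> {a<..b}" by simp
  qed
  show "card (park_space f C ` C) = card {a<..b}"
    using card_image[OF inj_on_park_space[of f C]] assms(2) by simp
qed simp

definition jump_on :: "nat set \<Rightarrow> (nat \<Rightarrow> nat) \<Rightarrow> nat" where
  "jump_on C f = (\<Sum>i\<in>C. park_space f C i - f i)"

definition lucky_on :: "nat set \<Rightarrow> (nat \<Rightarrow> nat) \<Rightarrow> nat" where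
  "lucky_on C f = card {i \<in> C. park_space f C i = f i}"

definition critic_on :: "nat \<Rightarrow> nat set \<Rightarrow> (nat \<Rightarrow> nat) \<Rightarrow> nat" where
  "critic_on b C f = card {i \<in> C. {park_space f C i + 1..b} \<subseteq> park_space f C ` {j \<in> C. j < i}}"

definition park_weight :: "'a::comm_semiring_1 \<Rightarrow> 'a \<Rightarrow> 'a \<Rightarrow> nat \<Rightarrow> nat set \<Rightarrow> (nat \<Rightarrow> nat) \<Rightarrow> 'a"
  where "park_weight q u c b C f = q ^ jump_on C f * u ^ lucky_on C f * c ^ critic_on b C f"

definition park_gf :: "'a::comm_semiring_1 \<Rightarrow> 'a \<Rightarrow> 'a \<Rightarrow> nat set \<Rightarrow> nat \<Rightarrow> nat \<Rightarrow> 'a" where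
  "park_gf q u c C a b = (\<Sum>f\<in>parking_funs C a b. park_weight q u c b C f)"

locale last_car_split =
  fixes C :: "nat set" and a b :: nat
  assumes finite_C: "finite C" and C_nonempty: "C \<noteq> {}" and b_eq: "b = a + card C"
begin

definition z where "z = Max C"

definition C' where "C' = C - {z}"

lemma z_in_C: "z \<in> C"
  unfolding z_def using finite_C C_nonempty by simp

lemma z_notin_C': "z \<notin> C'"
  unfolding C'_def by simp

lemma le_z: "i \<in> C \<Longrightarrow> i \<le> z"
  unfolding z_def using finite_C by simp

lemma less_z: "i \<in> C' \<Longrightarrow> i < z"
  unfolding C'_def z_def using Max_ge[OF finite_C, of i] by auto

lemma finite_C': "finite C'"
  unfolding C'_def using finite_C by simp

lemma card_C': "card C' = card C - 1"
  unfolding C'_def using z_in_C finite_C by simp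

lemma earlier_than_z: "{j \<in> C. j < z} = C'"
  using less_z unfolding C'_def by auto

lemma C_split: "I \<subseteq> C' \<Longrightarrow> C = insert z (I \<union> (C' - I))"
  unfolding C'_def using z_in_C by auto

lemma sum_C_split:
  assumes "I \<subseteq> C'"
  shows "sum F C = sum F I + sum F (C' - I) + F z"
proof -
  have "finite I" using assms finite_C' finite_subset by blast
  then have "sum F (insert z (I \<union> (C' - I))) = sum F I + sum F (C' - I) + F z"
    using finite_C' z_notin_C' assms by (intro sum_insert_Un_disjoint) auto
  then show ?thesis using C_split[OF assms] by simp
qed

lemma part_sizes:
  assumes "s \<in> {a<..b}" "I \<subseteq> C'" "card I = s - Suc a"
  shows "finite I" "card I < card C" "s - 1 = a + card I"
    "card (C' - I) = card C - Suc (s - Suc a)" "card (C' - I) < card C" "b = s + card (C' - I)"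
proof -
  show "finite I" using assms(2) finite_C' finite_subset by blast
  have "card I \<le> card C'" using card_mono[OF finite_C' assms(2)] .
  moreover have "0 < card C" using finite_C C_nonempty by (simp add: card_gt_0_iff)
  ultimately show "card I < card C" "card (C' - I) = card C - Suc (s - Suc a)"
    using card_Diff_subset[OF \<open>finite I\<close> assms(2)] card_C' assms(3) by auto
  then show "card (C' - I) < card C" "b = s + card (C' - I)" "s - 1 = a + card I"
    using assms(1,3) b_eq by auto
qed

text \<open>The last car parks at s; the earlier cars preferring spaces below s form I and fill
  (a, s); the others prefer spaces above s and fill (s, b]; x is the last car's preference.\<close>

definition decompositions where
  "decompositions = (SIGMA s:{a<..b}. SIGMA I:{I. I \<subseteq> C' \<and> card I = s - Suc a}.
     parking_funs I a (s - 1) \<times> parking_funs (C' - I) s b \<times> {a<..s})"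

definition glue :: "nat \<times> nat set \<times> (nat \<Rightarrow> nat) \<times> (nat \<Rightarrow> nat) \<times> nat \<Rightarrow> nat \<Rightarrow> nat" where
  "glue t = (case t of (s, I, g, h, x) \<Rightarrow>
     (\<lambda>i. if i \<in> I then g i else if i = z then x else if i \<in> C then h i else 0))"

definition decompose :: "(nat \<Rightarrow> nat) \<Rightarrow> nat \<times> nat set \<times> (nat \<Rightarrow> nat) \<times> (nat \<Rightarrow> nat) \<times> nat"
  where "decompose f = (let s = park_space f C z; I = {i \<in> C'. f i < s} in
     (s, I, \<lambda>i. if i \<in> I then f i else 0, \<lambda>i. if i \<in> C' - I then f i else 0, f z))"

context
  fixes s I g h x
  assumes decomposition: "(s, I, g, h, x) \<in> decompositions"
begin

lemma decomposition_parts: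
  "s \<in> {a<..b}" "I \<subseteq> C'" "card I = s - Suc a" "g \<in> parking_funs I a (s - 1)"
  "h \<in> parking_funs (C' - I) s b" "x \<in> {a<..s}"
  using decomposition unfolding decompositions_def by auto

lemma finite_I: "finite I"
  using part_sizes(1)[OF decomposition_parts(1-3)] .

lemma glue_apply:
  "i \<in> I \<Longrightarrow> glue (s, I, g, h, x) i = g i"
  "i \<in> C' - I \<Longrightarrow> glue (s, I, g, h, x) i = h i"
  "glue (s, I, g, h, x) z = x"
  using decomposition_parts(2) z_notin_C' unfolding glue_def C'_def by auto

lemma lower_part_below:
  "i \<in> I \<Longrightarrow> g i < s \<and> park_space g I i < s"
  using decomposition_parts(1,4) unfolding parking_funs_def by force

lemma upper_part_above: "i \<in> C' - I \<Longrightarrow> s < h i"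
  using decomposition_parts(5) unfolding parking_funs_def by auto

lemma park_space_glue:
  "i \<in> I \<Longrightarrow> park_space (glue (s, I, g, h, x)) C i = park_space g I i"
  "i \<in> C' - I \<Longrightarrow> park_space (glue (s, I, g, h, x)) C i = park_space h (C' - I) i"
proof -
  let ?f = "glue (s, I, g, h, x)"
  have on_I: "park_space ?f I i = park_space g I i" if "i \<in> I" for i
    using that glue_apply(1) by (intro park_space_cong) auto
  have on_J: "park_space ?f (C' - I) i = park_space h (C' - I) i" if "i \<in> C' - I" for i
    using that glue_apply(2) by (intro park_space_cong) auto
  have "(i \<in> I \<longrightarrow> park_space ?f C i = park_space ?f I i)
      \<and> (i \<in> C' - I \<longrightarrow> park_space ?f C i = park_space ?f (C' - I) i)" for i
  proof (rule park_space_separated)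
    show "\<forall>i\<in>C. i \<le> z" using le_z by blast
    show "I \<union> (C' - I) = C - {z}" "I \<inter> (C' - I) = {}"
      using decomposition_parts(2) unfolding C'_def by auto
    show "\<forall>i\<in>I. park_space ?f I i < s \<or> park_space ?f C i < s"
      using on_I lower_part_below by simp
    show "\<forall>j\<in>C' - I. s < ?f j"
      using glue_apply(2) upper_part_above by simp
  qed
  then show
    "i \<in> I \<Longrightarrow> park_space ?f C i = park_space g I i"
    "i \<in> C' - I \<Longrightarrow> park_space ?f C i = park_space h (C' - I) i"
    using on_I on_J by auto
qed

lemma park_space_glue_image:
  "park_space g I ` I = {a<..<s}" "park_space h (C' - I) ` (C' - I) = {s<..b}"
proof -
  show "park_space g I ` I = {a<..<s}"
    using park_space_image[OF finite_I _ decomposition_parts(4)] decomposition_parts(1,3)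
    by (auto simp: greaterThanAtMost_def greaterThanLessThan_def)
  show "park_space h (C' - I) ` (C' - I) = {s<..b}"
    using park_space_image[OF _ _ decomposition_parts(5)] finite_C'
      part_sizes(6)[OF decomposition_parts(1-3)] by simp
qed

lemma park_space_glue_before_z:
  "park_space (glue (s, I, g, h, x)) C ` {j \<in> C. j < z} = {a<..<s} \<union> {s<..b}"
proof -
  let ?f = "glue (s, I, g, h, x)"
  have "C' = I \<union> (C' - I)" using decomposition_parts(2) by auto
  then have "park_space ?f C ` C' = park_space ?f C ` I \<union> park_space ?f C ` (C' - I)"
    by (metis image_Un)
  also have "\<dots> = park_space g I ` I \<union> park_space h (C' - I) ` (C' - I)"
    using park_space_glue by (intro arg_cong2[where f = "(\<union>)"] image_cong) auto
  finally show ?thesis unfolding earlier_than_z park_space_glue_image .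
qed

lemma park_space_glue_z: "park_space (glue (s, I, g, h, x)) C z = s"
  unfolding park_space.simps[of _ C z] park_space_glue_before_z glue_apply(3)
  using decomposition_parts(6) by (intro first_free_eqI) auto

lemma glue_mem: "glue (s, I, g, h, x) \<in> parking_funs C a b"
proof -
  let ?f = "glue (s, I, g, h, x)"
  have "?f i = 0" if "i \<notin> C" for i
    using that decomposition_parts(2) z_in_C unfolding glue_def C'_def by auto
  moreover have "a < ?f i \<and> ?f i \<le> b \<and> park_space ?f C i \<le> b" if i: "i \<in> C" for i
  proof -
    consider "i \<in> I" | "i \<in> C' - I" | "i = z"
      using i C_split[OF decomposition_parts(2)] by blast
    then show ?thesis
    proof cases
      case 1
      then show ?thesis
        using glue_apply(1) park_space_glue(1) decomposition_parts(1,4)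
        unfolding parking_funs_def by force
    next
      case 2
      then show ?thesis
        using glue_apply(2) park_space_glue(2) decomposition_parts(1,5)
        unfolding parking_funs_def by force
    next
      case 3
      then show ?thesis
        using glue_apply(3) park_space_glue_z decomposition_parts(1,6) by auto
    qed
  qed
  ultimately show ?thesis unfolding parking_funs_def by blast
qed

lemma jump_on_glue: "jump_on C (glue (s, I, g, h, x)) = jump_on I g + jump_on (C' - I) h + (s - x)"
  unfolding jump_on_def sum_C_split[OF decomposition_parts(2)]
  using glue_apply park_space_glue park_space_glue_z by simp

lemma lucky_on_glue:
  "lucky_on C (glue (s, I, g, h, x)) = lucky_on I g + lucky_on (C' - I) h + (if x = s then 1 else 0)"
  unfolding lucky_on_def card_filter_eq_sum[OF finite_C] card_filter_eq_sum[OF finite_I]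
    card_filter_eq_sum[OF finite_Diff[OF finite_C']] sum_C_split[OF decomposition_parts(2)]
  using glue_apply park_space_glue park_space_glue_z by simp

lemma glue_occupied_before:
  assumes "i \<in> C'"
  shows "park_space (glue (s, I, g, h, x)) C ` {j \<in> C. j < i}
       = park_space g I ` {j \<in> I. j < i} \<union> park_space h (C' - I) ` {j \<in> C' - I. j < i}"
proof -
  have "{j \<in> C. j < i} = {j \<in> I. j < i} \<union> {j \<in> C' - I. j < i}"
    using less_z[OF assms] decomposition_parts(2) unfolding C'_def by auto
  then show ?thesis
    using park_space_glue by (auto simp: image_Un intro!: arg_cong2[where f = "(\<union>)"] image_cong)
qed

text \<open>Space s stays free until the last car arrives, so no car of I is critical, while
  the cars of I all park below s and cannot affect criticality of the other cars.\<close>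

lemma critic_on_glue: "critic_on b C (glue (s, I, g, h, x)) = critic_on b (C' - I) h + 1"
proof -
  let ?f = "glue (s, I, g, h, x)"
  define crit where "crit f C i \<longleftrightarrow> {park_space f C i + 1..b} \<subseteq> park_space f C ` {j \<in> C. j < i}"
    for f C i
  have s_free: "s \<notin> park_space ?f C ` C'"
    using park_space_glue_before_z unfolding earlier_than_z by auto
  have lower: "\<not> crit ?f C i" if i: "i \<in> I" for i
  proof
    assume "crit ?f C i"
    moreover have "s \<in> {park_space ?f C i + 1..b}"
      using park_space_glue(1)[OF i] lower_part_below[OF i] decomposition_parts(1) by simp
    moreover have "{j \<in> C. j < i} \<subseteq> C'"
      using i decomposition_parts(2) less_z unfolding C'_def by force
    ultimately show False using s_free unfolding crit_def by blast
  qed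
  have upper: "crit ?f C i \<longleftrightarrow> crit h (C' - I) i" if i: "i \<in> C' - I" for i
  proof -
    let ?p = "park_space h (C' - I) i"
    have "i \<in> C'" using i by simp
    have "s < ?p" using upper_part_above[OF i] park_space_ge_notin(1)[of h i "C' - I"] by simp
    moreover have "\<forall>y \<in> park_space g I ` {j \<in> I. j < i}. y < s"
      using lower_part_below by auto
    ultimately have "{?p + 1..b} \<inter> park_space g I ` {j \<in> I. j < i} = {}"
      by fastforce
    then show ?thesis
      unfolding crit_def glue_occupied_before[OF \<open>i \<in> C'\<close>] park_space_glue(2)[OF i] by blast
  qed
  have last: "crit ?f C z"
  proof -
    have "{s + 1..b} \<subseteq> {a<..<s} \<union> {s<..b}" by auto
    then show ?thesis unfolding crit_def park_space_glue_before_z park_space_glue_z .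
  qed
  have "critic_on b C ?f = (\<Sum>i\<in>C. if crit ?f C i then 1 else 0)"
    unfolding critic_on_def crit_def by (rule card_filter_eq_sum[OF finite_C])
  also have "\<dots> = (\<Sum>i\<in>C' - I. if crit h (C' - I) i then 1 else 0) + 1"
    unfolding sum_C_split[OF decomposition_parts(2)] using lower upper last by simp
  also have "\<dots> = critic_on b (C' - I) h + 1"
    unfolding critic_on_def crit_def using card_filter_eq_sum[OF finite_Diff[OF finite_C']] by simp
  finally show ?thesis .
qed

lemma park_weight_glue:
  "park_weight q u c b C (glue (s, I, g, h, x)) =
     park_weight q u 1 (s - 1) I g * park_weight q u c b (C' - I) h
     * (c * q ^ (s - x) * u ^ (if x = s then 1 else 0))"
  unfolding park_weight_def jump_on_glue lucky_on_glue critic_on_glue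
  by (simp add: power_add mult_ac)

lemma decompose_glue: "decompose (glue (s, I, g, h, x)) = (s, I, g, h, x)"
proof -
  let ?f = "glue (s, I, g, h, x)"
  have "{i \<in> C'. ?f i < s} = I"
    using glue_apply lower_part_below upper_part_above decomposition_parts(2)
    by (force simp: not_less_iff_gr_or_eq)
  moreover have "(\<lambda>i. if i \<in> I then ?f i else 0) = g"
    using glue_apply(1) decomposition_parts(4) unfolding parking_funs_def by auto
  moreover have "(\<lambda>i. if i \<in> C' - I then ?f i else 0) = h"
    using glue_apply(2) decomposition_parts(5) unfolding parking_funs_def by auto
  ultimately show ?thesis
    unfolding decompose_def Let_def park_space_glue_z glue_apply(3) by simp
qed

end

lemma park_space_ne_z: "i \<in> C' \<Longrightarrow> park_space f C i \<noteq> park_space f C z"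
  using inj_onD[OF inj_on_park_space[of f C] _ _ z_in_C] z_notin_C' unfolding C'_def by auto

context
  fixes f
  assumes f: "f \<in> parking_funs C a b"
begin

lemma park_space_z_range: "park_space f C z \<in> {a<..b}"
  using park_space_image[OF finite_C b_eq f] z_in_C by blast

lemma park_space_z_free: "i \<in> C' \<Longrightarrow> park_space f C z \<notin> park_space f C ` {j \<in> C. j < i}"
proof
  assume i: "i \<in> C'" and "park_space f C z \<in> park_space f C ` {j \<in> C. j < i}"
  then obtain j where j: "j \<in> C" "j < i" "park_space f C j = park_space f C z" by auto
  then have "j \<in> C'" using less_z[OF i] unfolding C'_def by simp
  with j(3) show False using park_space_ne_z by blast
qed

lemma earlier_below:
  assumes i: "i \<in> C'" and less: "f i < park_space f C z"
  shows "park_space f C i < park_space f C z"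
proof -
  have "park_space f C i \<le> park_space f C z"
    unfolding park_space.simps[of f C i] using less park_space_z_free[OF i] by (intro first_free_le) auto
  with park_space_ne_z[where f = f, OF i] show ?thesis by simp
qed

lemma earlier_above:
  assumes i: "i \<in> C'" and not_less: "\<not> f i < park_space f C z"
  shows "park_space f C z < f i"
proof -
  have "f i \<noteq> park_space f C z"
  proof
    assume "f i = park_space f C z"
    then have "park_space f C i = park_space f C z"
      unfolding park_space.simps[of f C i] using park_space_z_free[OF i] by (intro first_free_eqI) auto
    with park_space_ne_z[where f = f, OF i] show False by simp
  qed
  with not_less show ?thesis by simp
qed

lemma park_space_decompose:
  defines "I \<equiv> {i \<in> C'. f i < park_space f C z}"
  shows "i \<in> I \<Longrightarrow> park_space (\<lambda>i. if i \<in> I then f i else 0) I i = park_space f C i"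
    and "i \<in> C' - I \<Longrightarrow> park_space (\<lambda>i. if i \<in> C' - I then f i else 0) (C' - I) i = park_space f C i"
proof -
  have separated: "(i \<in> I \<longrightarrow> park_space f C i = park_space f I i)
      \<and> (i \<in> C' - I \<longrightarrow> park_space f C i = park_space f (C' - I) i)"
  proof (rule park_space_separated)
    show "\<forall>i\<in>C. i \<le> z" using le_z by blast
    show "I \<union> (C' - I) = C - {z}" "I \<inter> (C' - I) = {}" unfolding I_def C'_def by auto
    show "\<forall>i\<in>I. park_space f I i < park_space f C z \<or> park_space f C i < park_space f C z"
      unfolding I_def using earlier_below by blast
    show "\<forall>j\<in>C' - I. park_space f C z < f j"
      unfolding I_def using earlier_above by blast
  qed
  have restrict: "park_space (\<lambda>i. if i \<in> A then f i else 0) A i = park_space f A i" if "i \<in> A" for A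
    using that by (intro park_space_cong) auto
  show "i \<in> I \<Longrightarrow> park_space (\<lambda>i. if i \<in> I then f i else 0) I i = park_space f C i"
    using separated restrict[of I] by simp
  show "i \<in> C' - I \<Longrightarrow> park_space (\<lambda>i. if i \<in> C' - I then f i else 0) (C' - I) i = park_space f C i"
    using separated restrict[of "C' - I"] by simp
qed

lemma park_space_lower_image:
  "park_space f C ` {i \<in> C'. f i < park_space f C z} = {a<..<park_space f C z}"
proof
  let ?s = "park_space f C z"
  show "park_space f C ` {i \<in> C'. f i < ?s} \<subseteq> {a<..<?s}"
  proof (rule image_subsetI)
    fix i assume i: "i \<in> {i \<in> C'. f i < ?s}"
    then have "a < f i" using f unfolding parking_funs_def C'_def by auto
    with i earlier_below park_space_ge_notin(1)[of f i C] show "park_space f C i \<in> {a<..<?s}" by auto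
  qed
  show "{a<..<?s} \<subseteq> park_space f C ` {i \<in> C'. f i < ?s}"
  proof
    fix t assume t: "t \<in> {a<..<?s}"
    then have "t \<in> park_space f C ` C"
      using park_space_z_range park_space_image[OF finite_C b_eq f] by auto
    then obtain k where k: "k \<in> C" "t = park_space f C k" by auto
    have "k \<noteq> z" using k t by auto
    then have "k \<in> C'" using k(1) unfolding C'_def by simp
    moreover have "f k < ?s"
      using earlier_above[OF \<open>k \<in> C'\<close>] park_space_ge_notin(1)[of f k C] k t by fastforce
    ultimately show "t \<in> park_space f C ` {i \<in> C'. f i < ?s}" using k by blast
  qed
qed

lemma decompose_mem: "decompose f \<in> decompositions"
proof -
  define s where "s = park_space f C z"
  define I where "I = {i \<in> C'. f i < s}"
  define g where "g = (\<lambda>i. if i \<in> I then f i else 0)"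
  define h where "h = (\<lambda>i. if i \<in> C' - I then f i else 0)"
  have dec: "decompose f = (s, I, g, h, f z)"
    unfolding decompose_def s_def I_def g_def h_def Let_def by simp
  have f_range: "a < f i" "park_space f C i \<le> b" if "i \<in> C" for i
    using f that unfolding parking_funs_def by auto
  have s: "s \<in> {a<..b}" unfolding s_def by (rule park_space_z_range)
  have "inj_on (park_space f C) I"
    using inj_on_park_space by (rule inj_on_subset) (auto simp: I_def C'_def)
  then have card_I: "card I = s - Suc a"
    using card_image park_space_lower_image unfolding I_def s_def by fastforce
  have g: "g \<in> parking_funs I a (s - 1)"
    using park_space_decompose(1) earlier_below f_range
    unfolding parking_funs_def g_def I_def s_def C'_def by force
  have h: "h \<in> parking_funs (C' - I) s b"
    using park_space_decompose(2) earlier_above f_range park_space_ge_notin(1)[of f _ C]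
    unfolding parking_funs_def h_def I_def s_def C'_def by (force intro: order_trans)
  have "f z \<in> {a<..s}"
    using f_range[OF z_in_C] park_space_ge_notin(1)[of f z C] unfolding s_def by simp
  then show ?thesis
    unfolding dec decompositions_def using s card_I g h by (auto simp: I_def)
qed

lemma glue_decompose: "glue (decompose f) = f"
proof
  fix i
  have "f i = 0" if "i \<notin> C" using f that unfolding parking_funs_def by blast
  then show "glue (decompose f) i = f i"
    unfolding decompose_def glue_def Let_def C'_def by auto
qed

end

lemma bij_betw_glue: "bij_betw glue decompositions (parking_funs C a b)"
  by (rule bij_betw_byWitness[where f' = decompose])
     (auto simp: decompose_glue glue_decompose decompose_mem glue_mem)

lemma park_gf_rec:
  "park_gf q u c C a b = c * (\<Sum>s\<in>{a<..b}. \<Sum>I\<in>{I. I \<subseteq> C' \<and> card I = s - Suc a}.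
     park_gf q u 1 I a (s - 1) * park_gf q u c (C' - I) s b
     * (\<Sum>x\<in>{a<..s}. q ^ (s - x) * u ^ (if x = s then 1 else 0)))"
proof -
  define Is where "Is s = {I. I \<subseteq> C' \<and> card I = s - Suc a}" for s
  define T where "T s I = parking_funs I a (s - 1) \<times> parking_funs (C' - I) s b \<times> {a<..s}" for s I
  define W where "W t = park_weight q u c b C (glue t)" for t
  have finite_Is: "finite (Is s)" for s
    by (rule finite_subset[of _ "Pow C'"]) (auto simp: Is_def finite_C')
  have finite_T: "I \<in> Is s \<Longrightarrow> finite (T s I)" for s I
    unfolding T_def Is_def using finite_C' by (auto intro!: finite_parking_funs dest: finite_subset)
  have "park_gf q u c C a b = (\<Sum>t\<in>decompositions. W t)"
    unfolding park_gf_def W_def by (rule sum.reindex_bij_betw[OF bij_betw_glue, symmetric])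
  also have "\<dots> = (\<Sum>s\<in>{a<..b}. \<Sum>I\<in>Is s. \<Sum>r\<in>T s I. W (s, I, r))"
    unfolding decompositions_def Is_def[symmetric] T_def[symmetric]
    by (simp add: sum.Sigma finite_Is finite_T)
  also have "\<dots> = (\<Sum>s\<in>{a<..b}. \<Sum>I\<in>Is s. c * (park_gf q u 1 I a (s - 1)
      * park_gf q u c (C' - I) s b * (\<Sum>x\<in>{a<..s}. q ^ (s - x) * u ^ (if x = s then 1 else 0))))"
  proof (intro sum.cong refl)
    fix s I assume sI: "s \<in> {a<..b}" "I \<in> Is s"
    have "W (s, I, g, h, x) = park_weight q u 1 (s - 1) I g * park_weight q u c b (C' - I) h
        * (c * q ^ (s - x) * u ^ (if x = s then 1 else 0))"
      if "(g, h, x) \<in> T s I" for g h x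
    proof -
      have "(s, I, g, h, x) \<in> decompositions"
        using that sI unfolding T_def Is_def decompositions_def by auto
      then show ?thesis unfolding W_def by (rule park_weight_glue)
    qed
    then show "(\<Sum>r\<in>T s I. W (s, I, r)) = c * (park_gf q u 1 I a (s - 1)
        * park_gf q u c (C' - I) s b * (\<Sum>x\<in>{a<..s}. q ^ (s - x) * u ^ (if x = s then 1 else 0)))"
      unfolding T_def sum.cartesian_product' park_gf_def
      by (simp add: sum_distrib_left sum_distrib_right mult_ac) (rule sum.swap)
  qed
  finally show ?thesis unfolding Is_def by (simp add: sum_distrib_left)
qed

end

lemma sum_last_preference:
  assumes "a < s"
  shows "(\<Sum>x\<in>{a<..s}. q ^ (s - x) * u ^ (if x = s then 1 else 0)) = bracket q u (s - Suc a)"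
  unfolding bracket_def using assms
  by (intro sum.reindex_bij_witness[of _ "\<lambda>j. s - j" "\<lambda>x. s - x"]) auto

lemma park_gf_empty: "park_gf q u c {} a b = 1"
proof -
  have "parking_funs {} a b = {\<lambda>_. 0}" unfolding parking_funs_def by auto
  then show ?thesis
    by (simp add: park_gf_def park_weight_def jump_on_def lucky_on_def critic_on_def)
qed

lemma park_gf_eq_recursive_gf:
  "finite C \<Longrightarrow> b = a + card C \<Longrightarrow> park_gf q u c C a b = recursive_gf q u c (card C)"
proof (induction "card C" arbitrary: C a b c rule: less_induct)
  case less
  show ?case
  proof (cases "card C")
    case 0
    then show ?thesis using less.prems by (simp add: park_gf_empty)
  next
    case (Suc n)
    then interpret last_car_split C a b
      using less.prems by unfold_locales auto
    have IH_lower: "park_gf q u 1 I a (s - 1) = recursive_gf q u 1 (s - Suc a)"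
      if "s \<in> {a<..b}" "I \<subseteq> C'" "card I = s - Suc a" for s I
      using less.hyps[OF part_sizes(2,1,3)[OF that]] that(3) by simp
    have IH_upper: "park_gf q u c (C' - I) s b = recursive_gf q u c (n - (s - Suc a))"
      if "s \<in> {a<..b}" "I \<subseteq> C'" "card I = s - Suc a" for s I
      using less.hyps[OF part_sizes(5)[OF that] _ part_sizes(6)[OF that]] finite_C'
        part_sizes(4)[OF that] Suc by simp
    define R where "R k = recursive_gf q u 1 k * recursive_gf q u c (n - k) * bracket q u k" for k
    have "park_gf q u c C a b
        = c * (\<Sum>s\<in>{a<..b}. \<Sum>I\<in>{I. I \<subseteq> C' \<and> card I = s - Suc a}. R (s - Suc a))"
      unfolding park_gf_rec R_def using IH_lower IH_upper
      by (intro arg_cong[where f = "(*) c"] sum.cong refl) (auto simp: sum_last_preference)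
    also have "\<dots> = c * (\<Sum>s\<in>{a<..a + Suc n}. of_nat (n choose (s - Suc a)) * R (s - Suc a))"
      by (simp add: n_subsets[OF finite_C'] card_C' Suc b_eq)
    also have "\<dots> = c * (\<Sum>k\<le>n. of_nat (n choose k) * R k)"
      by (simp only: sum_greaterThanAtMost_reindex[where F = "\<lambda>k. of_nat (n choose k) * R k"])
    also have "\<dots> = recursive_gf q u c (card C)"
      unfolding Suc R_def by (simp add: mult_ac)
    finally show ?thesis .
  qed
qed

lemma length_park_spaces: "length (park_spaces occ P) = length P"
  by (induction P arbitrary: occ) (auto simp: Let_def)

lemma nth_park_spaces:
  "c < length P \<Longrightarrow> park_spaces occ P ! c = first_free (P ! c) (occ \<union> set (take c (park_spaces occ P)))"
proof (induction P arbitrary: occ c)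
  case (Cons p ps)
  then show ?case by (cases c) (simp_all add: Let_def first_free_def)
qed simp

definition pref_fun :: "nat list \<Rightarrow> nat \<Rightarrow> nat" where
  "pref_fun P i = (if i < length P then P ! i else 0)"

lemma set_take_spaces:
  assumes "c \<le> length P"
  shows "set (take c (spaces P)) = (!) (spaces P) ` {0..<c}"
  using assms nth_image[of c "spaces P"] unfolding spaces_def by (simp add: length_park_spaces)

lemma spaces_nth: "c < length P \<Longrightarrow> spaces P ! c = park_space (pref_fun P) {0..<length P} c"
proof (induction c rule: less_induct)
  case (less c)
  have "spaces P ! c = first_free (P ! c) ((!) (spaces P) ` {0..<c})"
    using nth_park_spaces[OF less.prems, of "{}"] set_take_spaces[of c P] less.prems
    unfolding spaces_def by simp
  also have "(!) (spaces P) ` {0..<c} = park_space (pref_fun P) {0..<length P} ` {j \<in> {0..<length P}. j < c}"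
    using less by (auto intro!: image_cong)
  moreover have "pref_fun P c = P ! c" using less.prems by (simp add: pref_fun_def)
  ultimately show ?case using park_space.simps[of "pref_fun P" "{0..<length P}" c] by simp
qed

lemma bij_betw_pref_fun: "bij_betw pref_fun (parking_functions n) (parking_funs {0..<n} 0 n)"
proof (rule bij_betw_byWitness[where f' = "\<lambda>f. map f [0..<n]"])
  show "\<forall>P\<in>parking_functions n. map (pref_fun P) [0..<n] = P"
    unfolding parking_functions_def pref_fun_def by (auto intro: nth_equalityI)
  show "\<forall>f\<in>parking_funs {0..<n} 0 n. pref_fun (map f [0..<n]) = f"
    unfolding parking_funs_def pref_fun_def by auto
  show "pref_fun ` parking_functions n \<subseteq> parking_funs {0..<n} 0 n"
  proof
    fix f assume "f \<in> pref_fun ` parking_functions n"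
    then obtain P where P: "P \<in> parking_functions n" "f = pref_fun P" by auto
    then have len: "length P = n" and pos: "\<forall>x\<in>set P. 0 < x" and le: "\<forall>c<n. spaces P ! c \<le> n"
      unfolding parking_functions_def by auto
    have "0 < f i \<and> f i \<le> n \<and> park_space f {0..<n} i \<le> n" if "i \<in> {0..<n}" for i
      using that pos le len spaces_nth[of i P] park_space_ge_notin(1)[of f i "{0..<n}"]
      unfolding P(2) pref_fun_def by force
    moreover have "\<forall>i. i \<notin> {0..<n} \<longrightarrow> f i = 0" using P(2) len by (simp add: pref_fun_def)
    ultimately show "f \<in> parking_funs {0..<n} 0 n" unfolding parking_funs_def by simp
  qed
  show "(\<lambda>f. map f [0..<n]) ` parking_funs {0..<n} 0 n \<subseteq> parking_functions n"
  proof
    fix P assume "P \<in> (\<lambda>f. map f [0..<n]) ` parking_funs {0..<n} 0 n"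
    then obtain f where f: "f \<in> parking_funs {0..<n} 0 n" "P = map f [0..<n]" by auto
    then have "pref_fun P = f" unfolding parking_funs_def pref_fun_def by auto
    then show "P \<in> parking_functions n"
      using f spaces_nth[of _ P] unfolding parking_funs_def parking_functions_def by auto
  qed
qed

lemma parking_statistics:
  assumes "P \<in> parking_functions n"
  shows "jump P = jump_on {0..<n} (pref_fun P)" "lucky P = lucky_on {0..<n} (pref_fun P)"
    "critic n P = critic_on n {0..<n} (pref_fun P)"
proof -
  have len: "length P = n" using assms unfolding parking_functions_def by auto
  have pref: "pref_fun P c = P ! c" if "c < n" for c using that len by (simp add: pref_fun_def)
  have space: "spaces P ! c = park_space (pref_fun P) {0..<n} c" if "c < n" for c
    using that len spaces_nth by auto
  have occupied: "set (take c (spaces P)) = park_space (pref_fun P) {0..<n} ` {j \<in> {0..<n}. j < c}"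
    if "c < n" for c
    using that len space set_take_spaces[of c P] by (auto intro!: image_cong)
  show "jump P = jump_on {0..<n} (pref_fun P)"
    unfolding jump_def jump_on_def len using pref space by (auto simp: atLeast0LessThan)
  show "lucky P = lucky_on {0..<n} (pref_fun P)"
    unfolding lucky_def lucky_on_def len using pref space by (auto intro!: arg_cong[where f = card])
  show "critic n P = critic_on n {0..<n} (pref_fun P)"
    unfolding critic_def critic_on_def len using space occupied
    by (auto intro!: arg_cong[where f = card])
qed

theorem parking_functions_sum_eq_recursive_gf:
  "(\<Sum>P\<in>parking_functions n. q ^ jump P * u ^ lucky P * c ^ critic n P) = recursive_gf q u c n"
proof -
  have "(\<Sum>P\<in>parking_functions n. q ^ jump P * u ^ lucky P * c ^ critic n P)
      = (\<Sum>P\<in>parking_functions n. park_weight q u c n {0..<n} (pref_fun P))"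
    using parking_statistics by (auto simp: park_weight_def intro!: sum.cong)
  also have "\<dots> = park_gf q u c {0..<n} 0 n"
    unfolding park_gf_def by (rule sum.reindex_bij_betw[OF bij_betw_pref_fun])
  also have "\<dots> = recursive_gf q u c n"
    using park_gf_eq_recursive_gf[of "{0..<n}" n 0] by simp
  finally show ?thesis .
qed

section \<open>Rooted forests\<close>

definition forests_on :: "nat set \<Rightarrow> (nat \<Rightarrow> nat option) set" where
  "forests_on V = {par. (\<forall>v. v \<notin> V \<longrightarrow> par v = None) \<and> (\<forall>v w. par v = Some w \<longrightarrow> w \<in> V)
     \<and> (\<forall>v. (v, v) \<notin> (parent_rel par)\<^sup>+)}"

definition inv_on :: "nat set \<Rightarrow> (nat \<Rightarrow> nat option) \<Rightarrow> nat" where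
  "inv_on V par = card {(i, j). i \<in> V \<and> j \<in> V \<and> j < i \<and> descendant par i j}"

definition lead_on :: "nat set \<Rightarrow> (nat \<Rightarrow> nat option) \<Rightarrow> nat" where
  "lead_on V par = card {v \<in> V. \<forall>j. descendant par v j \<longrightarrow> v < j}"

definition tree_on :: "nat set \<Rightarrow> (nat \<Rightarrow> nat option) \<Rightarrow> nat" where
  "tree_on V par = card {v \<in> V. par v = None}"

definition forest_weight ::
  "'a::comm_semiring_1 \<Rightarrow> 'a \<Rightarrow> 'a \<Rightarrow> nat set \<Rightarrow> (nat \<Rightarrow> nat option) \<Rightarrow> 'a" where
  "forest_weight q u c V F = q ^ inv_on V F * u ^ lead_on V F * c ^ tree_on V F"

definition forest_gf :: "'a::comm_semiring_1 \<Rightarrow> 'a \<Rightarrow> 'a \<Rightarrow> nat set \<Rightarrow> 'a" where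
  "forest_gf q u c V = (\<Sum>F\<in>forests_on V. forest_weight q u c V F)"

lemma parent_rel_iff [simp]: "(v, w) \<in> parent_rel par \<longleftrightarrow> par v = Some w"
  unfolding parent_rel_def by simp

lemma forests_onD:
  assumes "F \<in> forests_on V"
  shows "v \<notin> V \<Longrightarrow> F v = None" "F v = Some w \<Longrightarrow> v \<in> V" "F v = Some w \<Longrightarrow> w \<in> V"
    "(v, v) \<notin> (parent_rel F)\<^sup>+"
proof -
  show out: "v \<notin> V \<Longrightarrow> F v = None" for v using assms unfolding forests_on_def by blast
  show "F v = Some w \<Longrightarrow> v \<in> V" using out[of v] by (cases "v \<in> V") simp_all
  show "F v = Some w \<Longrightarrow> w \<in> V" "(v, v) \<notin> (parent_rel F)\<^sup>+"
    using assms unfolding forests_on_def by blast+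
qed

lemma forests_onI:
  "(\<And>v. v \<notin> V \<Longrightarrow> F v = None) \<Longrightarrow> (\<And>v w. F v = Some w \<Longrightarrow> w \<in> V)
   \<Longrightarrow> (\<And>v. (v, v) \<notin> (parent_rel F)\<^sup>+) \<Longrightarrow> F \<in> forests_on V"
  unfolding forests_on_def by blast

lemma forests_on_empty: "forests_on {} = {\<lambda>_. None}"
proof -
  have "parent_rel (\<lambda>_. None) = {}" unfolding parent_rel_def by simp
  then show ?thesis unfolding forests_on_def by auto
qed

lemma finite_forests_on:
  assumes "finite V"
  shows "finite (forests_on V)"
proof (rule finite_subset)
  show "forests_on V \<subseteq> {F. \<forall>x. (x \<in> V \<longrightarrow> F x \<in> insert None (Some ` V)) \<and> (x \<notin> V \<longrightarrow> F x = None)}"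
  proof (intro subsetI CollectI allI)
    fix F x assume F: "F \<in> forests_on V"
    show "(x \<in> V \<longrightarrow> F x \<in> insert None (Some ` V)) \<and> (x \<notin> V \<longrightarrow> F x = None)"
      using forests_onD(2,3)[OF F] forests_onD(1)[OF F, of x] by (cases "F x") auto
  qed
  show "finite \<dots>"
    using finite_set_of_finite_funs[OF assms, of "insert None (Some ` V)" None] assms by simp
qed

lemma forests_on_trancl_mem:
  assumes F: "F \<in> forests_on V" and "(x, y) \<in> (parent_rel F)\<^sup>+"
  shows "x \<in> V \<and> y \<in> V"
  using assms(2)
proof (induction rule: trancl_induct)
  case (base y)
  then show ?case using forests_onD(2,3)[OF F] by simp
next
  case (step y z)
  then show ?case using forests_onD(3)[OF F] by simp
qed

lemma descendant_mem: "F \<in> forests_on V \<Longrightarrow> descendant F i j \<Longrightarrow> i \<in> V \<and> j \<in> V"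
  unfolding descendant_def using forests_on_trancl_mem by blast

lemma wf_parent_rel:
  assumes "finite V" "F \<in> forests_on V"
  shows "wf ((parent_rel F)\<inverse>)"
proof (rule finite_acyclic_wf_converse)
  have "parent_rel F \<subseteq> V \<times> V"
  proof
    fix p assume "p \<in> parent_rel F"
    then obtain v w where "p = (v, w)" "F v = Some w" by (cases p) auto
    then show "p \<in> V \<times> V" using forests_onD(2,3)[OF assms(2)] by simp
  qed
  then show "finite (parent_rel F)" using assms(1) finite_subset by blast
  show "acyclic (parent_rel F)" using forests_onD(4)[OF assms(2)] unfolding acyclic_def by blast
qed

lemma exists_root:
  assumes "finite V" "F \<in> forests_on V"
  shows "\<exists>r. (x, r) \<in> (parent_rel F)\<^sup>* \<and> F r = None"
proof (induction x rule: wf_induct_rule[OF wf_parent_rel[OF assms]])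
  case (1 x)
  show ?case
  proof (cases "F x")
    case (Some w)
    then obtain r where "(w, r) \<in> (parent_rel F)\<^sup>*" "F r = None" using 1 by auto
    with Some show ?thesis by (meson converse_rtrancl_into_rtrancl parent_rel_iff)
  qed blast
qed

lemma root_unique:
  assumes "(x, r1) \<in> (parent_rel F)\<^sup>*" "F r1 = None" "(x, r2) \<in> (parent_rel F)\<^sup>*" "F r2 = None"
  shows "r1 = r2"
proof -
  have "single_valued (parent_rel F)" unfolding single_valued_def by simp
  from single_valued_confluent[OF this assms(1,3)]
  show ?thesis using assms(2,4) by (auto elim: converse_rtranclE)
qed

lemma inv_on_eq_sum:
  assumes "finite V"
  shows "inv_on V F = (\<Sum>i\<in>V. card {j \<in> V. j < i \<and> descendant F i j})"
proof -
  have "{(i, j). i \<in> V \<and> j \<in> V \<and> j < i \<and> descendant F i j}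
      = Sigma V (\<lambda>i. {j \<in> V. j < i \<and> descendant F i j})"
    by auto
  then show ?thesis unfolding inv_on_def using assms by simp
qed

locale min_vertex_split =
  fixes V :: "nat set"
  assumes finite_V: "finite V" and V_nonempty: "V \<noteq> {}"
begin

definition m where "m = Min V"

lemma m_in_V: "m \<in> V"
  unfolding m_def using finite_V V_nonempty by simp

lemma m_le: "v \<in> V \<Longrightarrow> m \<le> v"
  unfolding m_def using finite_V by simp

lemma sum_V_split:
  assumes "r \<in> S" "S \<subseteq> V"
  shows "sum f V = sum f (S - {r}) + sum f (V - S) + f r"
proof -
  have "finite (S - {r})" using assms(2) finite_V finite_subset by blast
  then have "sum f (insert r ((S - {r}) \<union> (V - S))) = sum f (S - {r}) + sum f (V - S) + f r"
    using finite_V assms(1) by (intro sum_insert_Un_disjoint) auto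
  moreover have "V = insert r ((S - {r}) \<union> (V - S))" using assms by auto
  ultimately show ?thesis by simp
qed

text \<open>S is the vertex set of the tree containing m and r its root; deleting r leaves a
  forest on S - {r} whose roots are the children of r.\<close>

definition decompositions where
  "decompositions = (SIGMA S:{S. m \<in> S \<and> S \<subseteq> V}. SIGMA r:S. forests_on (S - {r}) \<times> forests_on (V - S))"

definition glue ::
  "nat set \<times> nat \<times> (nat \<Rightarrow> nat option) \<times> (nat \<Rightarrow> nat option) \<Rightarrow> nat \<Rightarrow> nat option" where
  "glue t = (case t of (S, r, F1, F2) \<Rightarrow> (\<lambda>v. if v \<in> S then (if v = r then None else
     (case F1 v of None \<Rightarrow> Some r | Some w \<Rightarrow> Some w)) else F2 v))"

context
  fixes S r F1 F2
  assumes decomposition: "(S, r, F1, F2) \<in> decompositions"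
begin

lemma decomposition_parts:
  "m \<in> S" "S \<subseteq> V" "r \<in> S" "F1 \<in> forests_on (S - {r})" "F2 \<in> forests_on (V - S)"
  using decomposition unfolding decompositions_def by auto

lemma finite_S: "finite S"
  using decomposition_parts(2) finite_V finite_subset by blast

lemma glue_apply:
  "glue (S, r, F1, F2) r = None"
  "v \<in> S - {r} \<Longrightarrow> glue (S, r, F1, F2) v = (case F1 v of None \<Rightarrow> Some r | Some w \<Rightarrow> Some w)"
  "v \<notin> S \<Longrightarrow> glue (S, r, F1, F2) v = F2 v"
  using decomposition_parts(3) unfolding glue_def by auto

lemma parent_rel_glue_supset:
  "parent_rel F1 \<subseteq> parent_rel (glue (S, r, F1, F2))"
  "parent_rel F2 \<subseteq> parent_rel (glue (S, r, F1, F2))"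
proof safe
  fix v w assume "(v, w) \<in> parent_rel F1"
  then have "v \<in> S - {r}" "F1 v = Some w" using forests_onD(2)[OF decomposition_parts(4)] by auto
  then show "(v, w) \<in> parent_rel (glue (S, r, F1, F2))" using glue_apply(2) by simp
next
  fix v w assume "(v, w) \<in> parent_rel F2"
  then have "v \<notin> S" "F2 v = Some w" using forests_onD(2)[OF decomposition_parts(5)] by auto
  then show "(v, w) \<in> parent_rel (glue (S, r, F1, F2))" using glue_apply(3) by simp
qed

lemma glue_reaches_root:
  assumes "x \<in> S - {r}"
  shows "(x, r) \<in> (parent_rel (glue (S, r, F1, F2)))\<^sup>+"
  using assms
proof (induction x rule: wf_induct_rule[OF wf_parent_rel[OF finite_Diff[OF finite_S] decomposition_parts(4)]])
  case (1 x)
  show ?case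
  proof (cases "F1 x")
    case None
    then show ?thesis using glue_apply(2)[OF 1(2)] by auto
  next
    case (Some w)
    then have "w \<in> S - {r}" using forests_onD(3)[OF decomposition_parts(4)] by simp
    then have "(w, r) \<in> (parent_rel (glue (S, r, F1, F2)))\<^sup>+" using 1 Some by simp
    moreover have "glue (S, r, F1, F2) x = Some w" using glue_apply(2)[OF 1(2)] Some by simp
    ultimately show ?thesis by (meson parent_rel_iff trancl_into_trancl2)
  qed
qed

lemma trancl_glue_cases:
  assumes "(x, y) \<in> (parent_rel (glue (S, r, F1, F2)))\<^sup>+"
  shows "(x \<notin> S \<and> (x, y) \<in> (parent_rel F2)\<^sup>+) \<or> (x \<in> S - {r} \<and> ((x, y) \<in> (parent_rel F1)\<^sup>+ \<or> y = r))"
  using assms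
proof (induction rule: trancl_induct)
  case (base y)
  then have Fx: "glue (S, r, F1, F2) x = Some y" by simp
  show ?case
  proof (cases "x \<in> S")
    case True
    with Fx glue_apply(1) have "x \<in> S - {r}" by auto
    with Fx show ?thesis using glue_apply(2) by (cases "F1 x") auto
  next
    case False
    with Fx show ?thesis using glue_apply(3) by auto
  qed
next
  case (step y z)
  then have Fy: "glue (S, r, F1, F2) y = Some z" by simp
  from step.IH show ?case
  proof (elim disjE conjE)
    assume x: "x \<notin> S" and xy: "(x, y) \<in> (parent_rel F2)\<^sup>+"
    have "y \<notin> S" using forests_on_trancl_mem[OF decomposition_parts(5) xy] by simp
    with Fy have "F2 y = Some z" using glue_apply(3) by simp
    with x xy show ?thesis by (meson parent_rel_iff trancl.trancl_into_trancl)
  next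
    assume x: "x \<in> S - {r}" and xy: "(x, y) \<in> (parent_rel F1)\<^sup>+"
    have y: "y \<in> S - {r}" using forests_on_trancl_mem[OF decomposition_parts(4) xy] by simp
    show ?thesis
    proof (cases "F1 y")
      case None
      with Fy y show ?thesis using glue_apply(2) x by simp
    next
      case (Some w)
      with Fy y glue_apply(2) have "F1 y = Some z" by simp
      with x xy show ?thesis by (meson parent_rel_iff trancl.trancl_into_trancl)
    qed
  next
    assume "y = r"
    with Fy show ?thesis using glue_apply(1) by simp
  qed
qed

lemma trancl_glue_iff:
  "(x, y) \<in> (parent_rel (glue (S, r, F1, F2)))\<^sup>+ \<longleftrightarrow>
     (x \<notin> S \<and> (x, y) \<in> (parent_rel F2)\<^sup>+) \<or> (x \<in> S - {r} \<and> ((x, y) \<in> (parent_rel F1)\<^sup>+ \<or> y = r))"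
  using trancl_glue_cases trancl_mono[OF _ parent_rel_glue_supset(1)]
    trancl_mono[OF _ parent_rel_glue_supset(2)] glue_reaches_root by blast

lemma descendant_glue_iff:
  "descendant (glue (S, r, F1, F2)) i j \<longleftrightarrow>
     (j \<notin> S \<and> descendant F2 i j) \<or> (j \<in> S - {r} \<and> (descendant F1 i j \<or> i = r))"
  unfolding descendant_def trancl_glue_iff by auto

lemma glue_mem: "glue (S, r, F1, F2) \<in> forests_on V"
proof (rule forests_onI)
  show "glue (S, r, F1, F2) v = None" if "v \<notin> V" for v
  proof -
    have "v \<notin> S" using that decomposition_parts(2) by auto
    then show ?thesis using that glue_apply(3) forests_onD(1)[OF decomposition_parts(5), of v] by simp
  qed
  show "w \<in> V" if "glue (S, r, F1, F2) v = Some w" for v w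
  proof (cases "v \<in> S")
    case True
    with that glue_apply(1) have v: "v \<in> S - {r}" by auto
    show ?thesis
    proof (cases "F1 v")
      case None
      then show ?thesis using that glue_apply(2)[OF v] decomposition_parts(2,3) by auto
    next
      case (Some w')
      then have "w' \<in> S" using forests_onD(3)[OF decomposition_parts(4)] by simp
      then show ?thesis using that Some glue_apply(2)[OF v] decomposition_parts(2) by auto
    qed
  next
    case False
    then show ?thesis
      using that glue_apply(3) forests_onD(3)[OF decomposition_parts(5)] by auto
  qed
  show "(v, v) \<notin> (parent_rel (glue (S, r, F1, F2)))\<^sup>+" for v
    unfolding trancl_glue_iff
    using forests_onD(4)[OF decomposition_parts(4)] forests_onD(4)[OF decomposition_parts(5)] by auto
qed

lemma descendant_glue_outside:
  assumes "v \<in> V - S"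
  shows "descendant (glue (S, r, F1, F2)) v j \<longleftrightarrow> descendant F2 v j"
  using assms decomposition_parts(3) descendant_mem[OF decomposition_parts(4), of v j]
    descendant_mem[OF decomposition_parts(5), of v j]
  unfolding descendant_glue_iff by auto

lemma descendant_glue_inside:
  assumes "v \<in> S - {r}"
  shows "descendant (glue (S, r, F1, F2)) v j \<longleftrightarrow> descendant F1 v j"
  using assms descendant_mem[OF decomposition_parts(4), of v j]
    descendant_mem[OF decomposition_parts(5), of v j]
  unfolding descendant_glue_iff by auto

lemma descendant_glue_root: "descendant (glue (S, r, F1, F2)) r j \<longleftrightarrow> j \<in> S - {r}"
  using decomposition_parts(3) descendant_mem[OF decomposition_parts(4), of r j]
    descendant_mem[OF decomposition_parts(5), of r j]
  unfolding descendant_glue_iff by auto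

lemma inv_on_glue:
  "inv_on V (glue (S, r, F1, F2)) = inv_on (S - {r}) F1 + inv_on (V - S) F2 + card {j \<in> S. j < r}"
proof -
  let ?F = "glue (S, r, F1, F2)"
  have "{j \<in> V. j < i \<and> descendant ?F i j} = {j \<in> S - {r}. j < i \<and> descendant F1 i j}"
    if "i \<in> S - {r}" for i
    using that descendant_glue_inside descendant_mem[OF decomposition_parts(4)] decomposition_parts(2)
    by blast
  moreover have "{j \<in> V. j < i \<and> descendant ?F i j} = {j \<in> V - S. j < i \<and> descendant F2 i j}"
    if "i \<in> V - S" for i
    using that descendant_glue_outside descendant_mem[OF decomposition_parts(5)] by blast
  moreover have "{j \<in> V. j < r \<and> descendant ?F r j} = {j \<in> S. j < r}"
    using descendant_glue_root decomposition_parts(2) by auto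
  ultimately show ?thesis
    unfolding inv_on_eq_sum[OF finite_V] inv_on_eq_sum[OF finite_Diff[OF finite_S]]
      inv_on_eq_sum[OF finite_Diff[OF finite_V]] sum_V_split[OF decomposition_parts(3,2)]
    by simp
qed

lemma lead_on_glue:
  "lead_on V (glue (S, r, F1, F2)) = lead_on (S - {r}) F1 + lead_on (V - S) F2 + (if r = m then 1 else 0)"
proof -
  let ?F = "glue (S, r, F1, F2)"
  have "(\<forall>j. descendant ?F r j \<longrightarrow> r < j) \<longleftrightarrow> r = m"
  proof
    assume "\<forall>j. descendant ?F r j \<longrightarrow> r < j"
    then have "r \<le> m" using descendant_glue_root decomposition_parts(1)
      by (cases "r = m") (auto simp: less_imp_le)
    then show "r = m" using m_le decomposition_parts(2,3) by (simp add: subset_iff le_antisym)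
  next
    assume "r = m"
    then show "\<forall>j. descendant ?F r j \<longrightarrow> r < j"
      using descendant_glue_root m_le decomposition_parts(2) by (force simp: le_less)
  qed
  then show ?thesis
    unfolding lead_on_def card_filter_eq_sum[OF finite_V] card_filter_eq_sum[OF finite_Diff[OF finite_S]]
      card_filter_eq_sum[OF finite_Diff[OF finite_V]] sum_V_split[OF decomposition_parts(3,2)]
    using descendant_glue_inside descendant_glue_outside by simp
qed

lemma tree_on_glue: "tree_on V (glue (S, r, F1, F2)) = tree_on (V - S) F2 + 1"
proof -
  let ?F = "glue (S, r, F1, F2)"
  have "(\<Sum>v\<in>S - {r}. if ?F v = None then 1 else 0) = (0::nat)"
    using glue_apply(2) by (intro sum.neutral) (auto split: option.split)
  then show ?thesis
    unfolding tree_on_def card_filter_eq_sum[OF finite_V] card_filter_eq_sum[OF finite_Diff[OF finite_V]]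
      sum_V_split[OF decomposition_parts(3,2)]
    using glue_apply(1,3) by simp
qed

lemma forest_weight_glue:
  "forest_weight q u c V (glue (S, r, F1, F2)) =
     forest_weight q u 1 (S - {r}) F1 * forest_weight q u c (V - S) F2
     * (c * q ^ card {j \<in> S. j < r} * u ^ (if r = m then 1 else 0))"
  unfolding forest_weight_def inv_on_glue lead_on_glue tree_on_glue by (simp add: power_add mult_ac)

lemma m_reaches_root_glue:
  "(m, r) \<in> (parent_rel (glue (S, r, F1, F2)))\<^sup>*"
  using decomposition_parts(1) glue_reaches_root[of m] by (cases "m = r") auto

lemma tree_of_root_glue:
  "{v. (v, r) \<in> (parent_rel (glue (S, r, F1, F2)))\<^sup>*} = S"
proof -
  have "(v, r) \<in> (parent_rel (glue (S, r, F1, F2)))\<^sup>+ \<longleftrightarrow> v \<in> S - {r}" for v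
    unfolding trancl_glue_iff
    using forests_on_trancl_mem[OF decomposition_parts(5), of v r] decomposition_parts(3) by auto
  then show ?thesis using decomposition_parts(3) by (auto simp: rtrancl_eq_or_trancl)
qed

end

definition root :: "(nat \<Rightarrow> nat option) \<Rightarrow> nat" where
  "root F = (THE r. (m, r) \<in> (parent_rel F)\<^sup>* \<and> F r = None)"

lemma root_eq: "(m, r) \<in> (parent_rel F)\<^sup>* \<Longrightarrow> F r = None \<Longrightarrow> root F = r"
  unfolding root_def by (rule the_equality) (auto intro: root_unique)

definition tree_of_m :: "(nat \<Rightarrow> nat option) \<Rightarrow> nat set" where
  "tree_of_m F = {v. (v, root F) \<in> (parent_rel F)\<^sup>*}"

definition decompose ::
  "(nat \<Rightarrow> nat option) \<Rightarrow> nat set \<times> nat \<times> (nat \<Rightarrow> nat option) \<times> (nat \<Rightarrow> nat option)" where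
  "decompose F = (tree_of_m F, root F,
     \<lambda>v. if v \<in> tree_of_m F \<and> v \<noteq> root F \<and> F v \<noteq> Some (root F) then F v else None,
     \<lambda>v. if v \<in> tree_of_m F then None else F v)"

lemma decompose_glue:
  assumes "t \<in> decompositions"
  shows "decompose (glue t) = t"
proof -
  obtain S r F1 F2 where t: "t = (S, r, F1, F2)" by (cases t) auto
  note dec = assms[unfolded t]
  let ?F = "glue (S, r, F1, F2)"
  have root: "root ?F = r"
    using m_reaches_root_glue[OF dec] glue_apply(1)[OF dec] by (rule root_eq)
  have "(if v \<in> S \<and> v \<noteq> r \<and> ?F v \<noteq> Some r then ?F v else None) = F1 v" for v
  proof (cases "v \<in> S - {r}")
    case True
    then show ?thesis
      using glue_apply(2)[OF dec True] forests_onD(3)[OF decomposition_parts(4)[OF dec], of v]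
      by (cases "F1 v") auto
  qed (use forests_onD(1)[OF decomposition_parts(4)[OF dec]] in auto)
  moreover have "(if v \<in> S then None else ?F v) = F2 v" for v
    using glue_apply(3)[OF dec] forests_onD(1)[OF decomposition_parts(5)[OF dec], of v] by auto
  moreover have "tree_of_m ?F = S" unfolding tree_of_m_def root by (rule tree_of_root_glue[OF dec])
  ultimately show ?thesis unfolding t decompose_def root by (simp add: fun_eq_iff)
qed

context
  fixes F
  assumes F: "F \<in> forests_on V"
begin

lemma root_props: "(m, root F) \<in> (parent_rel F)\<^sup>*" "F (root F) = None"
proof -
  have "\<exists>!r. (m, r) \<in> (parent_rel F)\<^sup>* \<and> F r = None"
    using exists_root[OF finite_V F, of m] root_unique by blast
  from theI'[OF this] show "(m, root F) \<in> (parent_rel F)\<^sup>*" "F (root F) = None"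
    unfolding root_def by blast+
qed

lemma tree_of_m_props: "m \<in> tree_of_m F" "root F \<in> tree_of_m F" "tree_of_m F \<subseteq> V"
proof -
  show "m \<in> tree_of_m F" "root F \<in> tree_of_m F"
    unfolding tree_of_m_def using root_props(1) by auto
  have "v \<in> V" if "(v, root F) \<in> (parent_rel F)\<^sup>+" for v
    using forests_on_trancl_mem[OF F that] by simp
  moreover have "root F \<in> V"
    using root_props(1) m_in_V forests_on_trancl_mem[OF F, of m "root F"]
    by (cases "m = root F") (auto simp: rtrancl_eq_or_trancl)
  ultimately show "tree_of_m F \<subseteq> V" unfolding tree_of_m_def by (auto simp: rtrancl_eq_or_trancl)
qed

lemma tree_of_m_nonroot:
  assumes "v \<in> tree_of_m F" "v \<noteq> root F"
  obtains w where "F v = Some w" "w \<in> tree_of_m F"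
proof -
  have "(v, root F) \<in> (parent_rel F)\<^sup>+"
    using assms unfolding tree_of_m_def by (simp add: rtrancl_eq_or_trancl)
  then obtain w where "(v, w) \<in> parent_rel F" "(w, root F) \<in> (parent_rel F)\<^sup>*"
    by (meson tranclD)
  then show ?thesis using that unfolding tree_of_m_def by simp
qed

lemma parent_outside_tree_of_m:
  assumes "v \<notin> tree_of_m F" "F v = Some w"
  shows "w \<notin> tree_of_m F"
proof
  assume "w \<in> tree_of_m F"
  then have "(w, root F) \<in> (parent_rel F)\<^sup>*" unfolding tree_of_m_def by simp
  moreover have "(v, w) \<in> parent_rel F" using assms(2) by simp
  ultimately have "(v, root F) \<in> (parent_rel F)\<^sup>*" by (rule converse_rtrancl_into_rtrancl[rotated])
  with assms(1) show False unfolding tree_of_m_def by simp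
qed

lemma decompose_mem: "decompose F \<in> decompositions"
proof -
  let ?S = "tree_of_m F" and ?r = "root F"
  define F1 where "F1 v = (if v \<in> ?S \<and> v \<noteq> ?r \<and> F v \<noteq> Some ?r then F v else None)" for v
  define F2 where "F2 v = (if v \<in> ?S then None else F v)" for v
  have sub: "parent_rel F1 \<subseteq> parent_rel F" "parent_rel F2 \<subseteq> parent_rel F"
    unfolding F1_def F2_def parent_rel_def by (auto split: if_splits)
  have "F1 \<in> forests_on (?S - {?r})"
  proof (rule forests_onI)
    show "F1 v = None" if "v \<notin> ?S - {?r}" for v using that unfolding F1_def by auto
    show "w \<in> ?S - {?r}" if "F1 v = Some w" for v w
      using that tree_of_m_nonroot[of v] unfolding F1_def by (auto split: if_splits)
    show "(v, v) \<notin> (parent_rel F1)\<^sup>+" for v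
      using forests_onD(4)[OF F] trancl_mono[OF _ sub(1)] by blast
  qed
  moreover have "F2 \<in> forests_on (V - ?S)"
  proof (rule forests_onI)
    show "F2 v = None" if "v \<notin> V - ?S" for v
      using that forests_onD(1)[OF F, of v] unfolding F2_def by auto
    show "w \<in> V - ?S" if "F2 v = Some w" for v w
      using that parent_outside_tree_of_m[of v w] forests_onD(3)[OF F, of v w]
      unfolding F2_def by (auto split: if_splits)
    show "(v, v) \<notin> (parent_rel F2)\<^sup>+" for v
      using forests_onD(4)[OF F] trancl_mono[OF _ sub(2)] by blast
  qed
  ultimately show ?thesis
    unfolding decompose_def decompositions_def F1_def[symmetric] F2_def[symmetric]
    using tree_of_m_props by auto
qed

lemma glue_decompose: "glue (decompose F) = F"
proof
  fix v
  show "glue (decompose F) v = F v"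
  proof (cases "v \<in> tree_of_m F - {root F}")
    case True
    then obtain w where "F v = Some w" using tree_of_m_nonroot by blast
    with True show ?thesis unfolding decompose_def glue_def by (cases "w = root F") auto
  qed (use root_props(2) in \<open>auto simp: decompose_def glue_def\<close>)
qed

end

lemma bij_betw_glue: "bij_betw glue decompositions (forests_on V)"
  by (rule bij_betw_byWitness[where f' = decompose])
     (auto simp: decompose_glue glue_decompose decompose_mem glue_mem)

lemma forest_gf_rec:
  "forest_gf q u c V = (\<Sum>S\<in>{S. m \<in> S \<and> S \<subseteq> V}. \<Sum>r\<in>S.
     forest_gf q u 1 (S - {r}) * forest_gf q u c (V - S)
     * (c * q ^ card {j \<in> S. j < r} * u ^ (if r = m then 1 else 0)))"
proof -
  define Ss where "Ss = {S. m \<in> S \<and> S \<subseteq> V}"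
  define T where "T S r = forests_on (S - {r}) \<times> forests_on (V - S)" for S r
  define W where "W t = forest_weight q u c V (glue t)" for t
  have finite_Ss: "finite Ss" by (rule finite_subset[of _ "Pow V"]) (auto simp: Ss_def finite_V)
  have finite_S: "S \<in> Ss \<Longrightarrow> finite S" for S
    unfolding Ss_def using finite_V finite_subset by blast
  have finite_T: "S \<in> Ss \<Longrightarrow> finite (T S r)" for S r
    unfolding T_def using finite_S finite_V by (simp add: finite_forests_on)
  have "forest_gf q u c V = (\<Sum>t\<in>decompositions. W t)"
    unfolding forest_gf_def W_def by (rule sum.reindex_bij_betw[OF bij_betw_glue, symmetric])
  also have "\<dots> = (\<Sum>S\<in>Ss. \<Sum>r\<in>S. \<Sum>p\<in>T S r. W (S, r, p))"
    unfolding decompositions_def Ss_def[symmetric] T_def[symmetric]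
    by (simp add: sum.Sigma finite_Ss finite_S finite_T)
  also have "\<dots> = (\<Sum>S\<in>Ss. \<Sum>r\<in>S. forest_gf q u 1 (S - {r}) * forest_gf q u c (V - S)
      * (c * q ^ card {j \<in> S. j < r} * u ^ (if r = m then 1 else 0)))"
  proof (intro sum.cong refl)
    fix S r assume Sr: "S \<in> Ss" "r \<in> S"
    have "W (S, r, F1, F2) = forest_weight q u 1 (S - {r}) F1 * forest_weight q u c (V - S) F2
        * (c * q ^ card {j \<in> S. j < r} * u ^ (if r = m then 1 else 0))"
      if "(F1, F2) \<in> T S r" for F1 F2
    proof -
      have "(S, r, F1, F2) \<in> decompositions"
        using that Sr unfolding T_def Ss_def decompositions_def by auto
      then show ?thesis unfolding W_def by (rule forest_weight_glue)
    qed
    then show "(\<Sum>p\<in>T S r. W (S, r, p)) = forest_gf q u 1 (S - {r}) * forest_gf q u c (V - S)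
        * (c * q ^ card {j \<in> S. j < r} * u ^ (if r = m then 1 else 0))"
      unfolding T_def sum.cartesian_product' forest_gf_def
      by (simp add: sum_distrib_left sum_distrib_right mult_ac)
  qed
  finally show ?thesis unfolding Ss_def .
qed

lemma sum_root_weight:
  assumes "m \<in> S" "S \<subseteq> V"
  shows "(\<Sum>r\<in>S. q ^ card {j \<in> S. j < r} * u ^ (if r = m then 1 else 0)) = bracket q u (card S - 1)"
proof -
  have finite: "finite S" using assms(2) finite_V finite_subset by blast
  have "r = m \<longleftrightarrow> card {j \<in> S. j < r} = 0" if "r \<in> S" for r
    using that assms m_le finite by (auto simp: subset_iff not_less[symmetric] le_antisym)
  then have "(\<Sum>r\<in>S. q ^ card {j \<in> S. j < r} * u ^ (if r = m then 1 else 0))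
      = (\<Sum>r\<in>S. q ^ card {j \<in> S. j < r} * u ^ (if card {j \<in> S. j < r} = 0 then 1 else 0))"
    by (intro sum.cong) auto
  also have "\<dots> = (\<Sum>k<card S. q ^ k * u ^ (if k = 0 then 1 else 0))"
    using sum_rank[OF finite] .
  also have "{..<card S} = {..card S - 1}"
    using assms(1) finite by (cases "card S") auto
  finally show ?thesis unfolding bracket_def .
qed

lemma sum_trees_of_m:
  "(\<Sum>S\<in>{S. m \<in> S \<and> S \<subseteq> V}. h (card S))
     = (\<Sum>k\<le>card V - 1. of_nat ((card V - 1) choose k) * (h (Suc k) :: 'a::comm_semiring_1))"
proof -
  have "(\<Sum>S\<in>{S. m \<in> S \<and> S \<subseteq> V}. h (card S)) = (\<Sum>T\<in>Pow (V - {m}). h (card (insert m T)))"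
    by (rule sum.reindex_bij_witness[of _ "insert m" "\<lambda>S. S - {m}"])
       (use m_in_V in \<open>auto simp: insert_absorb\<close>)
  also have "\<dots> = (\<Sum>T\<in>Pow (V - {m}). h (Suc (card T)))"
  proof (intro sum.cong refl)
    fix T assume "T \<in> Pow (V - {m})"
    then have "finite T" "m \<notin> T" using finite_V finite_subset by auto
    then show "h (card (insert m T)) = h (Suc (card T))" by simp
  qed
  also have "\<dots> = (\<Sum>k\<le>card V - 1. of_nat ((card V - 1) choose k) * h (Suc k))"
    using sum_Pow_card[of "V - {m}" "\<lambda>k. h (Suc k)"] finite_V m_in_V by simp
  finally show ?thesis .
qed

end

lemma forest_gf_eq_recursive_gf: "finite V \<Longrightarrow> forest_gf q u c V = recursive_gf q u c (card V)"
proof (induction "card V" arbitrary: V c rule: less_induct)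
  case less
  show ?case
  proof (cases "card V")
    case 0
    then show ?thesis
      using less.prems
      by (simp add: forest_gf_def forests_on_empty forest_weight_def inv_on_def lead_on_def tree_on_def)
  next
    case (Suc n)
    then interpret min_vertex_split V
      using less.prems by unfold_locales auto
    define h where "h k = c * recursive_gf q u 1 (k - 1) * recursive_gf q u c (Suc n - k)
      * bracket q u (k - 1)" for k
    have tree_sum: "(\<Sum>r\<in>S. forest_gf q u 1 (S - {r}) * forest_gf q u c (V - S)
        * (c * q ^ card {j \<in> S. j < r} * u ^ (if r = m then 1 else 0))) = h (card S)"
      if S: "m \<in> S" "S \<subseteq> V" for S
    proof -
      have finite_S: "finite S" using S(2) finite_V finite_subset by blast
      have "card S \<le> card V" "card S \<noteq> 0" using card_mono[OF finite_V S(2)] finite_S S(1) by auto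
      then have "card S - 1 < card V" by linarith
      then have lower: "forest_gf q u 1 (S - {r}) = recursive_gf q u 1 (card S - 1)" if "r \<in> S" for r
        using less.hyps[of "S - {r}" 1] finite_S that by simp
      have "card (V - S) = Suc n - card S" using card_Diff_subset[OF finite_S S(2)] Suc by simp
      then have upper: "forest_gf q u c (V - S) = recursive_gf q u c (Suc n - card S)"
        using less.hyps[of "V - S" c] finite_V \<open>card S \<noteq> 0\<close> Suc by simp
      show ?thesis
        unfolding h_def sum_root_weight[OF S, symmetric] sum_distrib_left
        using lower upper by (intro sum.cong) (simp_all add: mult_ac)
    qed
    have "forest_gf q u c V = (\<Sum>S\<in>{S. m \<in> S \<and> S \<subseteq> V}. h (card S))"
      unfolding forest_gf_rec using tree_sum by (intro sum.cong) auto
    also have "\<dots> = (\<Sum>k\<le>n. of_nat (n choose k) * h (Suc k))"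
      unfolding sum_trees_of_m Suc by simp
    also have "\<dots> = recursive_gf q u c (card V)"
      unfolding Suc h_def by (simp add: sum_distrib_left mult_ac)
    finally show ?thesis .
  qed
qed

theorem rooted_forests_sum_eq_recursive_gf:
  "(\<Sum>F\<in>rooted_forests n. q ^ inv_forest n F * u ^ lead_forest n F * c ^ tree_forest n F)
     = recursive_gf q u c n"
proof -
  have "rooted_forests n = forests_on {1..n}" unfolding rooted_forests_def forests_on_def by simp
  moreover have "inv_forest n = inv_on {1..n}" "lead_forest n = lead_on {1..n}"
    "tree_forest n = tree_on {1..n}"
    unfolding inv_forest_def inv_on_def lead_forest_def lead_on_def tree_forest_def tree_on_def
    by (auto simp: fun_eq_iff)
  ultimately show ?thesis
    using forest_gf_eq_recursive_gf[of "{1..n}" q u c] by (simp add: forest_gf_def forest_weight_def)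
qed

theorem corollary5p4:
  fixes q u c :: "'a :: comm_semiring_1" and n :: nat
  assumes "n \<ge> 1"
  shows "(\<Sum>F \<in> rooted_forests n. q ^ inv_forest n F * u ^ lead_forest n F * c ^ tree_forest n F)
       = (\<Sum>P \<in> parking_functions n. q ^ jump P * u ^ lucky P * c ^ critic n P)"
  unfolding rooted_forests_sum_eq_recursive_gf parking_functions_sum_eq_recursive_gf ..

end
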